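(* Let $h>0$ and let $(\tau,\mu):\mathbb R\to\mathbb R^2$ be any solution of the system $\tau'=1+K(\tau,\mu)\mu$, $\mu'=-K(\tau,\mu)\tau$. Then $$\lim_{s\to+\infty}\tau(s)=+\infty,\quad \lim_{s\to-\infty}\tau(s)=-\infty,\quad \lim_{s\to+\infty}\mu(s)=-\infty,\quad \lim_{s\to-\infty}\mu(s)=+\infty.$$
   Context: Fix $h>0$. For $(\tau,\mu)\in\mathbb R^2$ put $r^2=\tau^2+\mu^2$ and define $K:\mathbb R^2\to\mathbb R$ by $$K(\tau,\mu)=\frac{2\big(\tau^2+h^2(1+\mu^2)\big)\tau+(h^2-1)(1+\mu^2)\mu}{(1+r^2)(h^2+r^2)}.$$ Consider the autonomous ODE system $\tau'=1+K(\tau,\mu)\mu$, $\mu'=-K(\tau,\mu)\tau$ for functions $s\mapsto(\tau(s),\mu(s))$; all its solutions are defined on $\mathbb R$. *)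

theory Defs
  imports "HOL-Analysis.Analysis"
begin

definition Kfun :: "real \<Rightarrow> real \<Rightarrow> real \<Rightarrow> real" where
  "Kfun h \<tau> \<mu> =
     (2 * (\<tau>\<^sup>2 + h\<^sup>2 * (1 + \<mu>\<^sup>2)) * \<tau> + (h\<^sup>2 - 1) * (1 + \<mu>\<^sup>2) * \<mu>)
     / ((1 + (\<tau>\<^sup>2 + \<mu>\<^sup>2)) * (h\<^sup>2 + (\<tau>\<^sup>2 + \<mu>\<^sup>2)))"

end

theory Submission
  imports Defs
begin

text \<open>
  The function \<open>\<rho> = \<tau>\<^sup>2 + \<mu>\<^sup>2\<close> satisfies \<open>\<rho>' = 2\<tau>\<close>, and \<open>\<tau>' \<ge> c > 0\<close> on a band \<open>\<bar>\<tau>\<bar> \<le> \<delta>\<close>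
  around the \<open>\<mu>\<close>-axis. Hence a trajectory cannot stay left of the band (\<open>\<rho>\<close> would decrease
  linearly), it crosses the band in finite time and never returns, after which \<open>\<rho>\<close> grows
  linearly. The slope \<open>v = \<mu>/\<tau>\<close> obeys \<open>v' = -(K\<rho> + \<mu>)/\<tau>\<^sup>2\<close>; the sign of \<open>K\<rho> + \<mu>\<close> traps
  \<open>v\<close> in a bounded interval, so \<open>\<rho> \<le> C\<tau>\<^sup>2\<close> and \<open>\<tau> \<rightarrow> \<infinity>\<close>. While \<open>v \<ge> -1\<close>, the quantity
  \<open>v + \<beta> ln \<tau>\<close> is nonincreasing for a small \<open>\<beta> > 0\<close>, which is incompatible with \<open>\<tau> \<rightarrow> \<infinity>\<close>;
  so eventually \<open>v < -1\<close>, i.e. \<open>\<mu> < -\<tau> \<rightarrow> -\<infinity>\<close>. The limits as \<open>s \<rightarrow> -\<infinity>\<close> follow from the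
  symmetry \<open>(\<tau>, \<mu>, s) \<mapsto> (-\<tau>, -\<mu>, -s)\<close> of the system, since \<open>K\<close> is odd.
\<close>

lemma Kfun_minus: "Kfun h (- t) (- m) = - Kfun h t m"
  unfolding Kfun_def by (simp add: algebra_simps minus_divide_left)

lemma Kfun_denom_pos:
  fixes h t m :: real
  shows "h > 0 \<Longrightarrow> (1 + (t\<^sup>2 + m\<^sup>2)) * (h\<^sup>2 + (t\<^sup>2 + m\<^sup>2)) > 0"
  by (intro mult_pos_pos) (auto intro: add_pos_nonneg)

lemma Kfun_denom_le:
  fixes h R X :: real
  assumes "0 \<le> R" "R \<le> X" "1 \<le> X"
  shows "(1 + R) * (h\<^sup>2 + R) \<le> 2 * (1 + h\<^sup>2) * X\<^sup>2"
proof -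
  have "h\<^sup>2 \<le> h\<^sup>2 * X" using assms(3) by (simp add: mult_le_cancel_left1)
  then have "h\<^sup>2 + R \<le> (1 + h\<^sup>2) * X" using assms(2) by (simp add: algebra_simps)
  moreover have "1 + R \<le> 2 * X" using assms by simp
  ultimately have "(1 + R) * (h\<^sup>2 + R) \<le> (2 * X) * ((1 + h\<^sup>2) * X)"
    using assms by (intro mult_mono) auto
  then show ?thesis by (simp add: power2_eq_square algebra_simps)
qed

lemma one_plus_Kfun_mult_eq:
  assumes h: "h > 0"
  shows "1 + Kfun h t m * m =
    (h\<^sup>2*(1+m\<^sup>2)\<^sup>2 + t\<^sup>2*(h\<^sup>2+m\<^sup>2) + t\<^sup>2*(1+m\<^sup>2) + t^4 + 2*(t\<^sup>2+h\<^sup>2*(1+m\<^sup>2))*t*m)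
    / ((1 + (t\<^sup>2 + m\<^sup>2)) * (h\<^sup>2 + (t\<^sup>2 + m\<^sup>2)))"
proof -
  have "(1 + (t\<^sup>2 + m\<^sup>2)) * (h\<^sup>2 + (t\<^sup>2 + m\<^sup>2)) \<noteq> 0"
    using Kfun_denom_pos[OF h, of t m] by linarith
  then show ?thesis unfolding Kfun_def
    by (simp add: field_simps power2_eq_square eval_nat_numeral)
qed

lemma one_plus_Kfun_mult_ge:
  assumes h: "h > 0" and t: "\<bar>t\<bar> \<le> h\<^sup>2/(2*(1+h\<^sup>2))"
  shows "1 + Kfun h t m * m \<ge> h\<^sup>2/(4*(1+h\<^sup>2))"
proof -
  define X where "X = 1 + m\<^sup>2"
  define N where "N = h\<^sup>2*X\<^sup>2 + t\<^sup>2*(h\<^sup>2+m\<^sup>2) + t\<^sup>2*X + t^4 + 2*(t\<^sup>2+h\<^sup>2*X)*t*m"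
  define D where "D = (1 + (t\<^sup>2 + m\<^sup>2)) * (h\<^sup>2 + (t\<^sup>2 + m\<^sup>2))"
  have X1: "X \<ge> 1" unfolding X_def by simp
  have hh: "1 + h\<^sup>2 > 0" by (simp add: add_pos_nonneg)
  have "h\<^sup>2/(2*(1+h\<^sup>2)) \<le> 1/2" using hh by (simp add: divide_simps)
  then have "\<bar>t\<bar> \<le> 1/2" using t by linarith
  then have t1: "t\<^sup>2 \<le> 1" using power_mono[of "\<bar>t\<bar>" 1 2] by simp
  have m2: "2*\<bar>m\<bar> \<le> X" unfolding X_def
    using sum_squares_ge_zero[of "\<bar>m\<bar> - 1" 0] by (simp add: power2_eq_square algebra_simps)
  have "\<bar>2*(t\<^sup>2+h\<^sup>2*X)*t*m\<bar> = (t\<^sup>2+h\<^sup>2*X) * \<bar>t\<bar> * (2*\<bar>m\<bar>)"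
    using X1 by (simp add: abs_mult)
  also have "\<dots> \<le> ((1+h\<^sup>2)*X) * (h\<^sup>2/(2*(1+h\<^sup>2))) * X"
    using t1 X1 t m2 by (intro mult_mono) (auto simp: algebra_simps)
  also have "\<dots> = (h\<^sup>2/2) * X\<^sup>2"
    using hh by (simp add: field_simps power2_eq_square)
  finally have "- ((h\<^sup>2/2) * X\<^sup>2) \<le> 2*(t\<^sup>2+h\<^sup>2*X)*t*m" by linarith
  moreover have "0 \<le> t\<^sup>2*(h\<^sup>2+m\<^sup>2) + t\<^sup>2*X + t^4"
    using X1 by (simp add: zero_le_even_power)
  ultimately have N: "(h\<^sup>2/2) * X\<^sup>2 \<le> N" unfolding N_def by linarith
  have D: "D \<le> 2*(1+h\<^sup>2)*X\<^sup>2" unfolding D_def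
    using t1 X1 by (intro Kfun_denom_le) (auto simp: X_def)
  have "h\<^sup>2/(4*(1+h\<^sup>2)) = ((h\<^sup>2/2) * X\<^sup>2) / (2*(1+h\<^sup>2)*X\<^sup>2)"
    using X1 by simp
  also have "\<dots> \<le> N / D"
  proof (rule frac_le)
    have "0 \<le> (h\<^sup>2/2) * X\<^sup>2" by simp
    then show "0 \<le> N" using N by linarith
    show "0 < D" unfolding D_def using Kfun_denom_pos[OF h] .
  qed (use N D in auto)
  also have "\<dots> = 1 + Kfun h t m * m"
    unfolding N_def D_def X_def one_plus_Kfun_mult_eq[OF h] ..
  finally show ?thesis .
qed

lemma abs_Kfun_mult_le:
  assumes h: "h > 0"
  shows "\<bar>Kfun h t m * m\<bar> \<le> 2 + 2*h\<^sup>2 + \<bar>h\<^sup>2 - 1\<bar>"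
proof -
  define R where "R = t\<^sup>2 + m\<^sup>2"
  define D where "D = (1 + R) * (h\<^sup>2 + R)"
  define g where "g = t\<^sup>2 + h\<^sup>2 * (1 + m\<^sup>2)"
  define B where "B = 2 + 2*h\<^sup>2 + \<bar>h\<^sup>2 - 1\<bar>"
  have D: "D > 0" unfolding D_def R_def using Kfun_denom_pos[OF h] .
  have R0: "R \<ge> 0" unfolding R_def by simp
  have g0: "g \<ge> 0" unfolding g_def by (simp add: add_nonneg_nonneg)
  have "2*(\<bar>t\<bar>*\<bar>m\<bar>) \<le> R" unfolding R_def
    using sum_squares_ge_zero[of "\<bar>t\<bar> - \<bar>m\<bar>" 0] by (simp add: power2_eq_square algebra_simps)
  then have tm: "\<bar>t\<bar>*\<bar>m\<bar> \<le> R" by (smt (verit) abs_ge_zero mult_nonneg_nonneg)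
  have "\<bar>2*g*t*m\<bar> = 2*g*(\<bar>t\<bar>*\<bar>m\<bar>)" using g0 by (simp add: abs_mult)
  also have "\<dots> \<le> 2*((1+h\<^sup>2)*(1+R))*R"
    using g0 tm R0 unfolding g_def R_def
    by (intro mult_mono mult_left_mono) (auto simp: algebra_simps)
  finally have cross: "\<bar>2*g*t*m\<bar> \<le> 2*(1+h\<^sup>2)*(1+R)*R" by (simp only: mult.assoc)
  have "\<bar>(h\<^sup>2 - 1) * (1 + m\<^sup>2) * m\<^sup>2\<bar> = \<bar>h\<^sup>2 - 1\<bar> * (1 + m\<^sup>2) * m\<^sup>2" by (simp add: abs_mult)
  also have "\<dots> \<le> \<bar>h\<^sup>2 - 1\<bar> * (1 + R) * R"
    unfolding R_def by (intro mult_mono mult_left_mono) auto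
  finally have "\<bar>2*g*t*m + (h\<^sup>2 - 1) * (1 + m\<^sup>2) * m\<^sup>2\<bar> \<le> B * ((1+R)*R)"
    using cross abs_triangle_ineq[of "2*g*t*m"] unfolding B_def by (simp add: algebra_simps)
  also have "\<dots> \<le> B * D"
    unfolding D_def B_def using R0 by (intro mult_left_mono) auto
  finally have "\<bar>2*g*t*m + (h\<^sup>2 - 1) * (1 + m\<^sup>2) * m\<^sup>2\<bar> / D \<le> B"
    using D by (simp add: pos_divide_le_eq)
  moreover have "Kfun h t m * m = (2*g*t*m + (h\<^sup>2 - 1) * (1 + m\<^sup>2) * m\<^sup>2) / D"
    unfolding Kfun_def g_def D_def R_def by (simp add: algebra_simps power2_eq_square)
  ultimately show ?thesis using D unfolding B_def by (simp add: abs_div)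
qed

definition slope_drift :: "real \<Rightarrow> real \<Rightarrow> real \<Rightarrow> real" where
  "slope_drift h t m = Kfun h t m * (t\<^sup>2 + m\<^sup>2) + m"

lemma slope_drift_eq:
  assumes h: "h > 0"
  shows "slope_drift h t m =
    ((t\<^sup>2 + m\<^sup>2) * (2*t+m) * (t\<^sup>2 + h\<^sup>2*m\<^sup>2) + 2*h\<^sup>2*(t\<^sup>2 + m\<^sup>2)*(t+m) + h\<^sup>2*m)
    / ((1 + (t\<^sup>2 + m\<^sup>2)) * (h\<^sup>2 + (t\<^sup>2 + m\<^sup>2)))"
proof -
  have "(1 + (t\<^sup>2 + m\<^sup>2)) * (h\<^sup>2 + (t\<^sup>2 + m\<^sup>2)) \<noteq> 0"
    using Kfun_denom_pos[OF h, of t m] by linarith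
  then show ?thesis unfolding slope_drift_def Kfun_def
    by (simp add: field_simps power2_eq_square)
qed

lemma slope_drift_pos:
  assumes h: "h > 0" and t: "t > 0" and m: "m > 0"
  shows "slope_drift h t m > 0"
proof -
  have "(t\<^sup>2 + m\<^sup>2) * (2*t+m) * (t\<^sup>2 + h\<^sup>2*m\<^sup>2) > 0"
    using t m h by (intro mult_pos_pos) (auto intro: add_pos_nonneg)
  moreover have "2*h\<^sup>2*(t\<^sup>2 + m\<^sup>2)*(t+m) \<ge> 0" using t m by simp
  moreover have "h\<^sup>2*m > 0" using h m by simp
  ultimately show ?thesis unfolding slope_drift_eq[OF h] using Kfun_denom_pos[OF h, of t m]
    by (intro divide_pos_pos) linarith
qed

lemma slope_drift_neg:
  assumes h: "h > 0" and t: "t > 0" and m: "m < -2*t"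
  shows "slope_drift h t m < 0"
proof -
  have r: "t\<^sup>2 + m\<^sup>2 > 0" using t by (simp add: add_pos_nonneg)
  have "(t\<^sup>2 + m\<^sup>2) * (2*t+m) < 0" using r m by (simp add: mult_pos_neg)
  moreover have "t\<^sup>2 + h\<^sup>2*m\<^sup>2 > 0" using t by (simp add: add_pos_nonneg)
  ultimately have "(t\<^sup>2 + m\<^sup>2) * (2*t+m) * (t\<^sup>2 + h\<^sup>2*m\<^sup>2) < 0" by (simp add: mult_neg_pos)
  moreover have "2*h\<^sup>2*(t\<^sup>2 + m\<^sup>2)*(t+m) \<le> 0" using t m r
    by (intro mult_nonneg_nonpos) auto
  moreover have "h\<^sup>2*m < 0" using h m t by (simp add: mult_pos_neg)
  ultimately show ?thesis unfolding slope_drift_eq[OF h] using Kfun_denom_pos[OF h, of t m]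
    by (intro divide_neg_pos) linarith
qed

lemma slope_drift_ge:
  assumes h: "h > 0" and V: "V \<ge> 1" and t: "t \<ge> 1" and t4: "t^4 \<ge> 2*h\<^sup>2"
    and m1: "-t \<le> m" and m2: "m \<le> V*t"
  shows "slope_drift h t m \<ge> t/(4*(1+h\<^sup>2)*(1+V\<^sup>2)\<^sup>2)"
proof -
  define R where "R = t\<^sup>2 + m\<^sup>2"
  define N where "N = R * (2*t+m) * (t\<^sup>2 + h\<^sup>2*m\<^sup>2) + 2*h\<^sup>2*R*(t+m) + h\<^sup>2*m"
  define D where "D = (1 + R) * (h\<^sup>2 + R)"
  have t0: "t > 0" using t by simp
  have Rt: "t\<^sup>2 \<le> R" unfolding R_def by simp
  have R1: "1 \<le> R" using Rt t one_le_power[of t 2] by linarith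
  have "t\<^sup>2 * t * t\<^sup>2 \<le> R * (2*t+m) * (t\<^sup>2 + h\<^sup>2*m\<^sup>2)"
    using Rt m1 t0 R1 by (intro mult_mono) auto
  moreover have "0 \<le> 2*h\<^sup>2*R*(t+m)" using m1 R1 by simp
  moreover have "- (h\<^sup>2*t) \<le> h\<^sup>2*m" using mult_left_mono[OF m1, of "h\<^sup>2"] by simp
  moreover have "t * h\<^sup>2 \<le> t * (t^4/2)" using t4 t0 by (intro mult_left_mono) auto
  moreover have "t\<^sup>2 * t * t\<^sup>2 = t * t^4" by (simp add: power2_eq_square eval_nat_numeral)
  ultimately have N: "t * t^4 / 2 \<le> N" unfolding N_def by (simp add: algebra_simps)
  have "\<bar>m\<bar> \<le> V*t" using m1 m2 V t0 mult_right_mono[OF V, of t] by linarith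
  then have "m\<^sup>2 \<le> V\<^sup>2*t\<^sup>2" using power_mono[of "\<bar>m\<bar>" "V*t" 2] by (simp add: power_mult_distrib)
  then have "R \<le> (1+V\<^sup>2)*t\<^sup>2" unfolding R_def by (simp add: algebra_simps)
  moreover have "1 \<le> (1+V\<^sup>2)*t\<^sup>2"
    using R1 Rt \<open>R \<le> (1+V\<^sup>2)*t\<^sup>2\<close> by linarith
  ultimately have D: "D \<le> 2*(1+h\<^sup>2)*((1+V\<^sup>2)*t\<^sup>2)\<^sup>2"
    unfolding D_def using R1 by (intro Kfun_denom_le) auto
  have "t/(4*(1+h\<^sup>2)*(1+V\<^sup>2)\<^sup>2) = (t * t^4 / 2) / (2*(1+h\<^sup>2)*((1+V\<^sup>2)*t\<^sup>2)\<^sup>2)"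
    using t0 by (simp add: power_mult_distrib power2_eq_square eval_nat_numeral)
  also have "\<dots> \<le> N / D"
  proof (rule frac_le)
    show "0 \<le> N" using N t0 by (smt (verit) zero_le_divide_iff zero_le_mult_iff zero_le_power)
    show "0 < D" unfolding D_def R_def using Kfun_denom_pos[OF h] .
  qed (use N D in auto)
  also have "\<dots> = slope_drift h t m" unfolding slope_drift_eq[OF h] N_def D_def R_def ..
  finally show ?thesis .
qed

text \<open>
  If \<open>f b \<le> L\<close>, the first time \<open>t \<in> [a, b]\<close> with \<open>f t \<le> L\<close> has \<open>f t = L\<close>, so \<open>f' t > 0\<close>
  and \<open>f < L\<close> just before \<open>t\<close>, contradicting minimality.
\<close>
lemma DERIV_stays_above:
  fixes f f' :: "real \<Rightarrow> real"
  assumes d: "\<And>s. s \<ge> a \<Longrightarrow> (f has_real_derivative f' s) (at s)"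
    and fa: "f a > L" and cr: "\<And>s. s \<ge> a \<Longrightarrow> f s = L \<Longrightarrow> f' s > 0" and b: "b \<ge> a"
  shows "f b > L"
proof (rule ccontr)
  assume "\<not> f b > L"
  then have fb: "f b \<le> L" by simp
  have ab: "a < b" using fa fb b by (cases "a = b") auto
  have ic: "\<And>x. a \<le> x \<Longrightarrow> isCont f x" using d by (blast intro: DERIV_isCont)
  have cont: "continuous_on {a..b} f" using ic by (intro continuous_at_imp_continuous_on) auto
  define S where "S = {a..b} \<inter> f -` {..L}"
  have Scl: "closed S" unfolding S_def by (intro continuous_closed_preimage cont) auto
  have bS: "b \<in> S" unfolding S_def using fb ab by auto
  have bdd: "bdd_below S" unfolding S_def by (rule bdd_belowI[of _ a]) auto
  define t where "t = Inf S"
  have tS: "t \<in> S" unfolding t_def using closed_contains_Inf[of S] Scl bS bdd by auto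
  have tlow: "\<And>x. x \<in> S \<Longrightarrow> t \<le> x" unfolding t_def using bdd by (simp add: cInf_lower)
  from tS have ta: "a \<le> t" "t \<le> b" "f t \<le> L" unfolding S_def by auto
  obtain x where x: "a \<le> x" "x \<le> t" "f x = L"
    using IVT2[of f t L a] ta fa ic by force
  then have "x \<in> S" unfolding S_def using ta by auto
  then have "t \<le> x" by (rule tlow)
  with x have ftL: "f t = L" by simp
  have at: "a < t" using fa ftL ta(1) by (cases "a = t") auto
  have "f' t > 0" using cr ta ftL by simp
  then obtain e where e: "e > 0" "\<And>k. k > 0 \<Longrightarrow> k < e \<Longrightarrow> f (t - k) < f t"
    using DERIV_pos_inc_left[OF d[OF ta(1)]] by blast
  define k where "k = min (e/2) ((t-a)/2)"
  have k: "k > 0" "k < e" "k \<le> (t-a)/2" using e at unfolding k_def by (auto simp: min_def)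
  have "f (t - k) < L" using e(2)[OF k(1) k(2)] ftL by simp
  then have "t - k \<in> S" unfolding S_def using k ta by auto
  then have "t \<le> t - k" by (rule tlow)
  then show False using k by simp
qed

lemma DERIV_diff_ge:
  fixes f f' :: "real \<Rightarrow> real"
  assumes ab: "a \<le> b" and d: "\<And>s. a \<le> s \<Longrightarrow> s \<le> b \<Longrightarrow> (f has_real_derivative f' s) (at s)"
    and c: "\<And>s. a \<le> s \<Longrightarrow> s \<le> b \<Longrightarrow> f' s \<ge> c"
  shows "f b - f a \<ge> c*(b-a)"
proof -
  define g where "g = (\<lambda>s. f s - c * s)"
  have "g a \<le> g b"
  proof (rule DERIV_nonneg_imp_nondecreasing[OF ab])
    fix x assume x: "a \<le> x" "x \<le> b"
    have "(g has_real_derivative (f' x - c*1)) (at x)"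
      unfolding g_def by (intro DERIV_diff d[OF x] DERIV_cmult DERIV_ident)
    then show "\<exists>y. (g has_real_derivative y) (at x) \<and> y \<ge> 0"
      using c[OF x] by force
  qed
  then show ?thesis unfolding g_def by (simp add: algebra_simps)
qed

lemma DERIV_diff_le:
  fixes f f' :: "real \<Rightarrow> real"
  assumes ab: "a \<le> b" and d: "\<And>s. a \<le> s \<Longrightarrow> s \<le> b \<Longrightarrow> (f has_real_derivative f' s) (at s)"
    and c: "\<And>s. a \<le> s \<Longrightarrow> s \<le> b \<Longrightarrow> f' s \<le> c"
  shows "f b - f a \<le> c*(b-a)"
proof -
  have "(-c)*(b-a) \<le> (\<lambda>s. - f s) b - (\<lambda>s. - f s) a"
    by (rule DERIV_diff_ge[OF ab, of _ "\<lambda>s. - f' s"]) (use d c in \<open>auto intro: DERIV_minus\<close>)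
  then show ?thesis by simp
qed

lemma filterlim_at_top_of_sq_ge_linear:
  fixes f :: "real \<Rightarrow> real"
  assumes c: "c > 0" and f: "\<And>s. a \<le> s \<Longrightarrow> 0 < f s \<and> c * (s - a) \<le> (f s)\<^sup>2"
  shows "filterlim f at_top at_top"
  unfolding filterlim_at_top
proof
  fix Z :: real
  have "Z \<le> f s" if "a + Z\<^sup>2 / c \<le> s" for s
  proof -
    have "Z\<^sup>2 / c \<le> s - a" "0 \<le> Z\<^sup>2 / c" using that c by simp_all
    then have "a \<le> s" and "Z\<^sup>2 \<le> c * (s - a)" using c by (linarith, simp add: pos_divide_le_eq mult.commute)
    with f have "\<bar>Z\<bar>\<^sup>2 \<le> (f s)\<^sup>2" by fastforce
    then have "\<bar>Z\<bar> \<le> f s" by (rule power2_le_imp_le) (use f[OF \<open>a \<le> s\<close>] in linarith)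
    then show ?thesis by simp
  qed
  then show "\<forall>\<^sub>F s in at_top. Z \<le> f s" unfolding eventually_at_top_linorder by blast
qed

locale trajectory =
  fixes h :: real and \<tau> \<mu> :: "real \<Rightarrow> real"
  assumes h_pos: "h > 0"
    and tau_deriv: "\<And>s. (\<tau> has_real_derivative (1 + Kfun h (\<tau> s) (\<mu> s) * \<mu> s)) (at s)"
    and mu_deriv: "\<And>s. (\<mu> has_real_derivative (- Kfun h (\<tau> s) (\<mu> s) * \<tau> s)) (at s)"
begin

lemma reflect: "trajectory h (\<lambda>s. - \<tau> (- s)) (\<lambda>s. - \<mu> (- s))"
proof (rule trajectory.intro)
  show "h > 0" by (rule h_pos)
  fix s
  have K: "Kfun h (- \<tau> (- s)) (- \<mu> (- s)) = - Kfun h (\<tau> (- s)) (\<mu> (- s))" by (rule Kfun_minus)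
  have "((\<lambda>x. \<tau> (- x)) has_real_derivative - (1 + Kfun h (\<tau> (- s)) (\<mu> (- s)) * \<mu> (- s))) (at s)"
    using tau_deriv[of "- s"] DERIV_mirror by blast
  from DERIV_minus[OF this]
  show "((\<lambda>s. - \<tau> (- s)) has_real_derivative
      1 + Kfun h (- \<tau> (- s)) (- \<mu> (- s)) * - \<mu> (- s)) (at s)"
    unfolding K by (simp add: algebra_simps)
  have "((\<lambda>x. \<mu> (- x)) has_real_derivative Kfun h (\<tau> (- s)) (\<mu> (- s)) * \<tau> (- s)) (at s)"
    using mu_deriv[of "- s"] DERIV_mirror by fastforce
  from DERIV_minus[OF this]
  show "((\<lambda>s. - \<mu> (- s)) has_real_derivative
      - Kfun h (- \<tau> (- s)) (- \<mu> (- s)) * - \<tau> (- s)) (at s)"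
    unfolding K by simp
qed

definition band_width :: real where
  "band_width = h\<^sup>2 / (2 * (1 + h\<^sup>2))"

lemma band_width_pos: "band_width > 0"
  unfolding band_width_def using h_pos by (simp add: add_pos_nonneg)

lemma tau_speed_ge: "\<bar>\<tau> s\<bar> \<le> band_width \<Longrightarrow> band_width / 2 \<le> 1 + Kfun h (\<tau> s) (\<mu> s) * \<mu> s"
  using one_plus_Kfun_mult_ge[OF h_pos, of "\<tau> s" "\<mu> s"] unfolding band_width_def by simp

lemma rho_deriv: "((\<lambda>s. (\<tau> s)\<^sup>2 + (\<mu> s)\<^sup>2) has_real_derivative 2 * \<tau> s) (at s)"
proof -
  have "((\<lambda>s. (\<tau> s)\<^sup>2 + (\<mu> s)\<^sup>2) has_real_derivative
      of_nat 2 * ((1 + Kfun h (\<tau> s) (\<mu> s) * \<mu> s) * (\<tau> s)^(2 - Suc 0))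
      + of_nat 2 * ((- Kfun h (\<tau> s) (\<mu> s) * \<tau> s) * (\<mu> s)^(2 - Suc 0))) (at s)"
    by (intro DERIV_add DERIV_power tau_deriv mu_deriv)
  then show ?thesis by (simp add: algebra_simps)
qed

lemma tau_stays_above:
  assumes L: "\<bar>L\<bar> \<le> band_width" and a: "\<tau> a > L" and ab: "a \<le> b"
  shows "\<tau> b > L"
proof (rule DERIV_stays_above[OF tau_deriv a _ ab])
  fix s assume "\<tau> s = L"
  then show "1 + Kfun h (\<tau> s) (\<mu> s) * \<mu> s > 0"
    using tau_speed_ge[of s] L band_width_pos by simp
qed

lemma exists_tau_gt_neg_band_width: "\<exists>s. \<tau> s > - band_width"
proof (rule ccontr)
  assume "\<not> ?thesis"
  then have left: "\<tau> s \<le> - band_width" for s by (simp add: not_less)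
  define \<rho> where "\<rho> s = (\<tau> s)\<^sup>2 + (\<mu> s)\<^sup>2" for s
  define b where "b = \<rho> 0 / band_width + 1"
  have b: "0 \<le> b" unfolding b_def \<rho>_def using band_width_pos by simp
  have "\<rho> b - \<rho> 0 \<le> (-2 * band_width) * (b - 0)"
  proof (rule DERIV_diff_le[OF b])
    show "(\<rho> has_real_derivative 2 * \<tau> s) (at s)" for s unfolding \<rho>_def[abs_def] by (rule rho_deriv)
    show "2 * \<tau> s \<le> -2 * band_width" for s using left[of s] by linarith
  qed
  also have "\<dots> = -2 * (\<rho> 0 + band_width)"
    unfolding b_def using band_width_pos by (simp add: field_simps)
  finally have "\<rho> b - \<rho> 0 \<le> -2 * (\<rho> 0 + band_width)" .
  moreover have "0 \<le> \<rho> b" "0 \<le> \<rho> 0" unfolding \<rho>_def by simp_all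
  ultimately show False using band_width_pos by argo
qed

lemma exists_tau_gt_band_width:
  assumes a: "\<tau> a > - band_width"
  shows "\<exists>b\<ge>a. \<tau> b > band_width"
proof (rule ccontr)
  assume right: "\<not> ?thesis"
  have in_band: "\<bar>\<tau> s\<bar> \<le> band_width" if "a \<le> s" for s
    using that right tau_stays_above[OF _ a, of s] band_width_pos by (auto simp: not_less)
  have "(band_width / 2) * ((a + 4) - a) \<le> \<tau> (a + 4) - \<tau> a"
  proof (rule DERIV_diff_ge[OF _ tau_deriv])
    show "band_width / 2 \<le> 1 + Kfun h (\<tau> s) (\<mu> s) * \<mu> s" if "a \<le> s" for s
      using tau_speed_ge[OF in_band[OF that]] .
  qed simp
  then have "\<tau> (a + 4) > band_width" using a by (simp add: algebra_simps)
  then show False using right by (metis add_increasing2 order_refl zero_le_numeral)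
qed

lemma eventually_tau_gt_band_width: "\<forall>\<^sub>F s in at_top. \<tau> s > band_width"
proof -
  obtain a where "\<tau> a > - band_width" using exists_tau_gt_neg_band_width ..
  then obtain b where "\<tau> b > band_width" using exists_tau_gt_band_width by blast
  then have "\<tau> s > band_width" if "b \<le> s" for s
    using that band_width_pos tau_stays_above[of band_width b s] by simp
  then show ?thesis unfolding eventually_at_top_linorder by blast
qed


lemma slope_deriv:
  assumes "\<tau> s \<noteq> 0"
  shows "((\<lambda>s. \<mu> s / \<tau> s) has_real_derivative - slope_drift h (\<tau> s) (\<mu> s) / (\<tau> s)\<^sup>2) (at s)"
  by (rule DERIV_cong[OF DERIV_divide[OF mu_deriv tau_deriv assms]])
    (simp add: slope_drift_def power2_eq_square algebra_simps)

lemma mu_stays_below: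
  assumes pos: "\<And>s. a \<le> s \<Longrightarrow> \<tau> s > 0"
    and cross: "\<And>s. a \<le> s \<Longrightarrow> \<mu> s = V * \<tau> s \<Longrightarrow> slope_drift h (\<tau> s) (\<mu> s) > 0"
    and start: "\<mu> a < V * \<tau> a" and ab: "a \<le> b"
  shows "\<mu> b < V * \<tau> b"
proof -
  have "- (\<mu> b / \<tau> b) > - V"
  proof (rule DERIV_stays_above[OF _ _ _ ab])
    show "((\<lambda>s. - (\<mu> s / \<tau> s)) has_real_derivative
        - (- slope_drift h (\<tau> s) (\<mu> s) / (\<tau> s)\<^sup>2)) (at s)" if "a \<le> s" for s
      using pos[OF that] by (intro DERIV_minus slope_deriv) simp
    show "- (\<mu> a / \<tau> a) > - V" using start pos[of a] by (simp add: pos_divide_less_eq)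
    show "- (- slope_drift h (\<tau> s) (\<mu> s) / (\<tau> s)\<^sup>2) > 0"
      if "a \<le> s" and "- (\<mu> s / \<tau> s) = - V" for s
      using that pos[OF that(1)] cross[OF that(1)] by (simp add: divide_eq_eq)
  qed
  then show ?thesis using pos[of b] ab by (simp add: pos_divide_less_eq)
qed

lemma mu_stays_above:
  assumes pos: "\<And>s. a \<le> s \<Longrightarrow> \<tau> s > 0"
    and cross: "\<And>s. a \<le> s \<Longrightarrow> \<mu> s = V * \<tau> s \<Longrightarrow> slope_drift h (\<tau> s) (\<mu> s) < 0"
    and start: "\<mu> a > V * \<tau> a" and ab: "a \<le> b"
  shows "\<mu> b > V * \<tau> b"
proof -
  have "\<mu> b / \<tau> b > V"
  proof (rule DERIV_stays_above[OF _ _ _ ab])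
    show "((\<lambda>s. \<mu> s / \<tau> s) has_real_derivative
        - slope_drift h (\<tau> s) (\<mu> s) / (\<tau> s)\<^sup>2) (at s)" if "a \<le> s" for s
      using pos[OF that] by (intro slope_deriv) simp
    show "\<mu> a / \<tau> a > V" using start pos[of a] by (simp add: pos_less_divide_eq)
    show "- slope_drift h (\<tau> s) (\<mu> s) / (\<tau> s)\<^sup>2 > 0" if "a \<le> s" and "\<mu> s / \<tau> s = V" for s
      using that pos[OF that(1)] cross[OF that(1)] by (simp add: divide_eq_eq divide_neg_pos)
  qed
  then show ?thesis using pos[of b] ab by (simp add: pos_less_divide_eq)
qed

lemma eventually_abs_mu_le: "\<exists>W\<ge>1. \<forall>\<^sub>F s in at_top. \<bar>\<mu> s\<bar> \<le> W * \<tau> s"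
proof -
  obtain a where "\<And>s. a \<le> s \<Longrightarrow> \<tau> s > band_width"
    using eventually_tau_gt_band_width unfolding eventually_at_top_linorder by blast
  then have pos: "\<And>s. a \<le> s \<Longrightarrow> \<tau> s > 0" using band_width_pos by force
  define W where "W = \<bar>\<mu> a\<bar> / \<tau> a + 3"
  have W: "W * \<tau> a = \<bar>\<mu> a\<bar> + 3 * \<tau> a" "W \<ge> 3"
    unfolding W_def using pos[of a] by (simp_all add: algebra_simps)
  have "\<mu> s < W * \<tau> s" if "a \<le> s" for s
  proof (rule mu_stays_below[OF pos _ _ that])
    show "slope_drift h (\<tau> s) (\<mu> s) > 0" if "a \<le> s" "\<mu> s = W * \<tau> s" for s
      using that pos[OF that(1)] W(2) by (intro slope_drift_pos h_pos) auto
    show "\<mu> a < W * \<tau> a" using W(1) pos[of a] by linarith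
  qed
  moreover have "- W * \<tau> s < \<mu> s" if "a \<le> s" for s
  proof (rule mu_stays_above[OF pos _ _ that])
    show "slope_drift h (\<tau> s) (\<mu> s) < 0" if "a \<le> s" "\<mu> s = - W * \<tau> s" for s
      using that pos[OF that(1)] W(2) by (intro slope_drift_neg h_pos) auto
    show "- W * \<tau> a < \<mu> a" using W(1) pos[of a] by linarith
  qed
  ultimately have "\<forall>\<^sub>F s in at_top. \<bar>\<mu> s\<bar> \<le> W * \<tau> s"
    unfolding eventually_at_top_linorder by (intro exI[of _ a]) (force simp: abs_le_iff)
  then show ?thesis using W(2) by (intro exI[of _ W]) simp
qed


lemma tau_sq_ge_linear: "\<exists>a c. c > 0 \<and> (\<forall>s\<ge>a. 0 < \<tau> s \<and> c * (s - a) \<le> (\<tau> s)\<^sup>2)"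
proof -
  obtain W where bound: "\<forall>\<^sub>F s in at_top. \<bar>\<mu> s\<bar> \<le> W * \<tau> s"
    using eventually_abs_mu_le by blast
  from eventually_tau_gt_band_width bound
  have "\<forall>\<^sub>F s in at_top. band_width < \<tau> s \<and> \<bar>\<mu> s\<bar> \<le> W * \<tau> s"
    by (rule eventually_conj)
  then obtain a where a: "\<And>s. a \<le> s \<Longrightarrow> band_width < \<tau> s \<and> \<bar>\<mu> s\<bar> \<le> W * \<tau> s"
    unfolding eventually_at_top_linorder by blast
  define c where "c = 2 * band_width / (1 + W\<^sup>2)"
  have "c * (s - a) \<le> (\<tau> s)\<^sup>2" if "a \<le> s" for s
  proof -
    have "(2 * band_width) * (s - a) \<le> ((\<tau> s)\<^sup>2 + (\<mu> s)\<^sup>2) - ((\<tau> a)\<^sup>2 + (\<mu> a)\<^sup>2)"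
    proof (rule DERIV_diff_ge[OF that rho_deriv])
      show "2 * band_width \<le> 2 * \<tau> u" if "a \<le> u" for u using a[OF that] by linarith
    qed
    also have "\<dots> \<le> (1 + W\<^sup>2) * (\<tau> s)\<^sup>2"
    proof -
      have "\<bar>\<mu> s\<bar>\<^sup>2 \<le> (W * \<tau> s)\<^sup>2" using a[OF that] by (intro power_mono) auto
      then have "(\<mu> s)\<^sup>2 \<le> W\<^sup>2 * (\<tau> s)\<^sup>2" by (simp add: power_mult_distrib)
      moreover have "0 \<le> (\<tau> a)\<^sup>2 + (\<mu> a)\<^sup>2" by simp
      moreover have "(1 + W\<^sup>2) * (\<tau> s)\<^sup>2 = (\<tau> s)\<^sup>2 + W\<^sup>2 * (\<tau> s)\<^sup>2" by (simp add: algebra_simps)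
      ultimately show ?thesis by linarith
    qed
    finally have "2 * band_width * (s - a) \<le> (\<tau> s)\<^sup>2 * (1 + W\<^sup>2)" by (simp only: mult.commute)
    moreover have "c * (s - a) = 2 * band_width * (s - a) / (1 + W\<^sup>2)" unfolding c_def by simp
    ultimately show ?thesis by (simp add: pos_divide_le_eq add_pos_nonneg)
  qed
  moreover have "c > 0" unfolding c_def using band_width_pos by (simp add: add_pos_nonneg)
  ultimately show ?thesis using a band_width_pos by (meson less_trans)
qed

lemma tau_at_top: "filterlim \<tau> at_top at_top"
proof -
  obtain a c where "c > 0" "\<And>s. a \<le> s \<Longrightarrow> 0 < \<tau> s \<and> c * (s - a) \<le> (\<tau> s)\<^sup>2"
    using tau_sq_ge_linear by blast
  then show ?thesis by (rule filterlim_at_top_of_sq_ge_linear)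
qed

text \<open>
  The constant \<open>\<beta> = \<alpha>/B\<close> is chosen so that \<open>(\<mu>/\<tau>)' \<le> -\<alpha>/\<tau>\<close> (from \<open>slope_drift_ge\<close>)
  dominates \<open>\<beta> (ln \<tau>)' \<le> \<beta> B/\<tau>\<close> (from \<open>abs_Kfun_mult_le\<close>).
\<close>
lemma slope_plus_log_tau_antimono:
  fixes W :: real
  defines "\<beta> \<equiv> 1 / (4 * (1 + h\<^sup>2) * (1 + W\<^sup>2)\<^sup>2 * (3 + 2 * h\<^sup>2 + \<bar>h\<^sup>2 - 1\<bar>))"
  assumes W: "W \<ge> 1"
    and region: "\<And>s. a \<le> s \<Longrightarrow> 1 \<le> \<tau> s \<and> 2 * h\<^sup>2 \<le> (\<tau> s)^4 \<and> - \<tau> s \<le> \<mu> s \<and> \<mu> s \<le> W * \<tau> s"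
    and ab: "a \<le> b"
  shows "\<mu> b / \<tau> b + \<beta> * ln (\<tau> b) \<le> \<mu> a / \<tau> a + \<beta> * ln (\<tau> a)"
proof (rule DERIV_nonpos_imp_nonincreasing[OF ab])
  fix s assume "a \<le> s" "s \<le> b"
  note r = region[OF \<open>a \<le> s\<close>]
  define t where "t = \<tau> s"
  define \<alpha> where "\<alpha> = 1 / (4 * (1 + h\<^sup>2) * (1 + W\<^sup>2)\<^sup>2)"
  define dtau where "dtau = 1 + Kfun h t (\<mu> s) * \<mu> s"
  have t: "t > 0" using r unfolding t_def by simp
  have "\<alpha> * t \<le> slope_drift h t (\<mu> s)"
    using slope_drift_ge[OF h_pos W, of t "\<mu> s"] r unfolding t_def \<alpha>_def by simp
  then have drift: "\<alpha> / t \<le> slope_drift h t (\<mu> s) / t\<^sup>2"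
    using t by (simp add: divide_simps power2_eq_square)
  define B where "B = 3 + 2 * h\<^sup>2 + \<bar>h\<^sup>2 - 1\<bar>"
  have B: "B > 0" "\<beta> = \<alpha> / B" unfolding B_def \<beta>_def \<alpha>_def by (simp_all add: add_pos_nonneg)
  have "dtau \<le> B" using abs_Kfun_mult_le[OF h_pos, of t "\<mu> s"] unfolding dtau_def B_def by simp
  then have "\<beta> * dtau \<le> \<beta> * B" using B unfolding \<alpha>_def by (intro mult_left_mono) auto
  then have "\<beta> * dtau \<le> \<alpha>" using B by simp
  then have speed: "\<beta> * (dtau / t) \<le> \<alpha> / t" using t by (simp add: divide_right_mono)
  have "((\<lambda>s. \<mu> s / \<tau> s + \<beta> * ln (\<tau> s)) has_real_derivative
      - slope_drift h t (\<mu> s) / t\<^sup>2 + \<beta> * (1 / t * dtau)) (at s)"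
    using t unfolding t_def dtau_def
    by (intro DERIV_add slope_deriv DERIV_cmult DERIV_chain2[OF DERIV_ln_divide tau_deriv]) auto
  moreover have "- slope_drift h t (\<mu> s) / t\<^sup>2 + \<beta> * (1 / t * dtau) \<le> 0"
    using drift speed by simp
  ultimately show "\<exists>y. ((\<lambda>s. \<mu> s / \<tau> s + \<beta> * ln (\<tau> s)) has_real_derivative y) (at s) \<and> y \<le> 0"
    by blast
qed


lemma eventually_tau_large: "\<forall>\<^sub>F s in at_top. 1 \<le> \<tau> s \<and> 2 * h\<^sup>2 \<le> (\<tau> s)^4"
proof -
  have "\<forall>\<^sub>F s in at_top. 1 + 2 * h\<^sup>2 \<le> \<tau> s"
    using tau_at_top unfolding filterlim_at_top by blast
  then show ?thesis
  proof eventually_elim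
    case (elim s)
    then have "1 \<le> \<tau> s" by (smt (verit) zero_le_power2)
    then have "\<tau> s ^ 1 \<le> \<tau> s ^ 4" by (intro power_increasing) auto
    with elim \<open>1 \<le> \<tau> s\<close> show ?case by simp
  qed
qed

lemma frequently_mu_lt_minus_tau: "\<exists>\<^sub>F s in at_top. \<mu> s < - \<tau> s"
proof (rule ccontr)
  assume "\<not> ?thesis"
  then have right: "\<forall>\<^sub>F s in at_top. - \<tau> s \<le> \<mu> s" by (simp add: not_frequently not_less)
  obtain W where W: "W \<ge> 1" and bound: "\<forall>\<^sub>F s in at_top. \<bar>\<mu> s\<bar> \<le> W * \<tau> s"
    using eventually_abs_mu_le by blast
  have "\<forall>\<^sub>F s in at_top. 1 \<le> \<tau> s \<and> 2 * h\<^sup>2 \<le> (\<tau> s)^4 \<and> - \<tau> s \<le> \<mu> s \<and> \<mu> s \<le> W * \<tau> s"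
    using eventually_tau_large right bound by eventually_elim auto
  then obtain a where region:
    "\<And>s. a \<le> s \<Longrightarrow> 1 \<le> \<tau> s \<and> 2 * h\<^sup>2 \<le> (\<tau> s)^4 \<and> - \<tau> s \<le> \<mu> s \<and> \<mu> s \<le> W * \<tau> s"
    unfolding eventually_at_top_linorder by blast
  define \<beta> where "\<beta> = 1 / (4 * (1 + h\<^sup>2) * (1 + W\<^sup>2)\<^sup>2 * (3 + 2 * h\<^sup>2 + \<bar>h\<^sup>2 - 1\<bar>))"
  have "1 + W\<^sup>2 > 0" "1 + h\<^sup>2 > 0" "3 + 2 * h\<^sup>2 + \<bar>h\<^sup>2 - 1\<bar> > 0"
    by (simp_all add: add_pos_nonneg)
  then have "\<beta> > 0" unfolding \<beta>_def by simp
  then have "filterlim (\<lambda>s. \<beta> * ln (\<tau> s)) at_top at_top"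
    by (intro filterlim_tendsto_pos_mult_at_top[OF tendsto_const] filterlim_compose[OF ln_at_top tau_at_top])
  then have "\<forall>\<^sub>F b in at_top. a \<le> b \<and> \<mu> a / \<tau> a + \<beta> * ln (\<tau> a) + 2 \<le> \<beta> * ln (\<tau> b)"
    unfolding filterlim_at_top by (intro eventually_conj eventually_ge_at_top) blast
  then obtain b where b: "a \<le> b" "\<mu> a / \<tau> a + \<beta> * ln (\<tau> a) + 2 \<le> \<beta> * ln (\<tau> b)"
    unfolding eventually_at_top_linorder by auto
  have "\<mu> b / \<tau> b + \<beta> * ln (\<tau> b) \<le> \<mu> a / \<tau> a + \<beta> * ln (\<tau> a)"
    using slope_plus_log_tau_antimono[OF W region b(1)] unfolding \<beta>_def .
  then have "\<mu> b / \<tau> b \<le> -2" using b(2) by linarith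
  moreover have "-1 \<le> \<mu> b / \<tau> b" using region[OF b(1)] by (simp add: pos_le_divide_eq)
  ultimately show False by linarith
qed


lemma eventually_mu_lt_minus_tau: "\<forall>\<^sub>F s in at_top. \<mu> s < - \<tau> s"
proof -
  obtain a where large: "\<And>s. a \<le> s \<Longrightarrow> 1 \<le> \<tau> s \<and> 2 * h\<^sup>2 \<le> (\<tau> s)^4"
    using eventually_tau_large unfolding eventually_at_top_linorder by blast
  obtain b where b: "a \<le> b" "\<mu> b < - \<tau> b"
    using frequently_ex[OF frequently_eventually_conj[OF frequently_mu_lt_minus_tau eventually_ge_at_top]]
    by blast
  have "\<mu> s < -1 * \<tau> s" if "b \<le> s" for s
  proof (rule mu_stays_below[OF _ _ _ that])
    show "\<tau> u > 0" if "b \<le> u" for u using large[of u] that b(1) by simp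
    show "slope_drift h (\<tau> u) (\<mu> u) > 0" if "b \<le> u" "\<mu> u = -1 * \<tau> u" for u
    proof -
      have "\<tau> u / (4 * (1 + h\<^sup>2) * (1 + 1\<^sup>2)\<^sup>2) \<le> slope_drift h (\<tau> u) (\<mu> u)"
        using that large[of u] b(1) by (intro slope_drift_ge h_pos) auto
      moreover have "\<tau> u / (4 * (1 + h\<^sup>2) * (1 + 1\<^sup>2)\<^sup>2) > 0"
        using that large[of u] b(1) by (simp add: add_pos_nonneg)
      ultimately show ?thesis by linarith
    qed
    show "\<mu> b < -1 * \<tau> b" using b(2) by simp
  qed
  then show ?thesis unfolding eventually_at_top_linorder by auto
qed

lemma mu_at_bot: "filterlim \<mu> at_bot at_top"
  unfolding filterlim_uminus_at_bot
  by (rule filterlim_at_top_mono[OF tau_at_top])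
    (use eventually_mu_lt_minus_tau in \<open>eventually_elim, simp\<close>)

end

theorem claim6:
  fixes h :: real and \<tau> \<mu> :: "real \<Rightarrow> real"
  assumes "h > 0"
    and "\<And>s. (\<tau> has_real_derivative (1 + Kfun h (\<tau> s) (\<mu> s) * \<mu> s)) (at s)"
    and "\<And>s. (\<mu> has_real_derivative (- Kfun h (\<tau> s) (\<mu> s) * \<tau> s)) (at s)"
  shows "filterlim \<tau> at_top at_top \<and> filterlim \<tau> at_bot at_bot
       \<and> filterlim \<mu> at_bot at_top \<and> filterlim \<mu> at_top at_bot"
proof -
  interpret forward: trajectory h \<tau> \<mu> using assms by unfold_locales
  interpret backward: trajectory h "\<lambda>s. - \<tau> (- s)" "\<lambda>s. - \<mu> (- s)" by (rule forward.reflect)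
  have "filterlim \<tau> at_bot at_bot"
    using backward.tau_at_top by (simp add: filterlim_at_bot_mirror filterlim_uminus_at_top)
  moreover have "filterlim \<mu> at_top at_bot"
    using backward.mu_at_bot by (simp add: filterlim_at_bot_mirror filterlim_uminus_at_bot)
  ultimately show ?thesis using forward.tau_at_top forward.mu_at_bot by blast
qed

end
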